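(* Let $(B,k)$ be an instance of the orthogonal buttons and scissors problem, with $B$ an $n\times m$ matrix, such that every row of $B$ contains at least one button, and such that there is no row block $X=[a,b]$ of $B$ and index $i_0\in X$ with the property that for every column $j$, either $B[X,\{j\}]$ contains no buttons, or both $B[[a,i_0-1],\{j\}]$ and $B[[i_0+1,b],\{j\}]$ contain at least $k$ buttons. If $n>(4k^2+1)(k+1)k(4k+6)^k$, then $(B,k)$ is a no-instance.
   Context: An instance of the orthogonal buttons and scissors problem is a pair $(B,k)$ where $B$ is an $n\times m$ matrix with nonnegative integer entries and $k$ is a nonnegative integer. Cell $(i,j)$ contains a button of color $c$ if $B[i,j]=c>0$, and no button if $B[i,j]=0$. A cut is either a horizontal cut (a sequence of consecutive cells in one row) or a vertical cut (a sequence of consecutive cells in one column). Cuts are applied one after another; a cut is valid at the moment it is applied if, among the buttons still present, its first and last cells contain buttons and all buttons in its cells have the same color. Applying a cut deletes all buttons in its cells. $(B,k)$ is a yes-instance if some sequence of at most $k$ cuts, each valid when applied, removes all buttons of $B$, and a no-instance otherwise. For a set of rows $X$ and set of columns $Y$, $B[X,Y]$ denotes the submatrix with entries $B[x,y]$, $x\in X$, $y\in Y$; $[a,b]$ denotes $\{a,\ldots,b\}$. A row block is a set $X$ of consecutive row indices such that for every column $j$, all buttons in $B[X,\{j\}]$ have the same color. *)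

theory Defs
  imports Main
begin

text \<open>A matrix B with n rows and m columns is a function nat => nat => nat,
  read on rows 1..n and columns 1..m (1-based, as in the paper).
  B i j = 0 means no button, B i j = c > 0 means a button of colour c.
  A state of the game is the set of cells that still carry a button.\<close>

type_synonym matrix = "nat \<Rightarrow> nat \<Rightarrow> nat"
type_synonym cell = "nat \<times> nat"

datatype cut =
    HCut nat nat nat
  | VCut nat nat nat

fun cut_cells :: "cut \<Rightarrow> cell set" where
  "cut_cells (HCut i j1 j2) = {(i, j) | j. j1 \<le> j \<and> j \<le> j2}"
| "cut_cells (VCut j i1 i2) = {(i, j) | i. i1 \<le> i \<and> i \<le> i2}"

fun cut_first :: "cut \<Rightarrow> cell" where
  "cut_first (HCut i j1 j2) = (i, j1)"
| "cut_first (VCut j i1 i2) = (i1, j)"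

fun cut_last :: "cut \<Rightarrow> cell" where
  "cut_last (HCut i j1 j2) = (i, j2)"
| "cut_last (VCut j i1 i2) = (i2, j)"

fun cut_wf :: "cut \<Rightarrow> bool" where
  "cut_wf (HCut i j1 j2) = (j1 \<le> j2)"
| "cut_wf (VCut j i1 i2) = (i1 \<le> i2)"

definition buttons :: "matrix \<Rightarrow> nat \<Rightarrow> nat \<Rightarrow> cell set" where
  "buttons B n m = {(i, j). i \<in> {1..n} \<and> j \<in> {1..m} \<and> B i j > 0}"

definition valid_cut :: "matrix \<Rightarrow> cell set \<Rightarrow> cut \<Rightarrow> bool" where
  "valid_cut B S c \<longleftrightarrow> cut_wf c \<and> cut_first c \<in> S \<and> cut_last c \<in> S \<and>
     (\<forall>p \<in> cut_cells c \<inter> S. \<forall>q \<in> cut_cells c \<inter> S. case_prod B p = case_prod B q)"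

fun clears :: "matrix \<Rightarrow> cell set \<Rightarrow> cut list \<Rightarrow> bool" where
  "clears B S [] = (S = {})"
| "clears B S (c # cs) = (valid_cut B S c \<and> clears B (S - cut_cells c) cs)"

definition yes_instance :: "matrix \<Rightarrow> nat \<Rightarrow> nat \<Rightarrow> nat \<Rightarrow> bool" where
  "yes_instance B n m k \<longleftrightarrow> (\<exists>cs. length cs \<le> k \<and> clears B (buttons B n m) cs)"

definition row_block :: "matrix \<Rightarrow> nat \<Rightarrow> nat \<Rightarrow> nat \<Rightarrow> nat \<Rightarrow> bool" where
  "row_block B n m a b \<longleftrightarrow> 1 \<le> a \<and> a \<le> b \<and> b \<le> n \<and>
     (\<forall>j \<in> {1..m}. \<forall>i \<in> {a..b}. \<forall>i' \<in> {a..b}.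
        B i j > 0 \<longrightarrow> B i' j > 0 \<longrightarrow> B i j = B i' j)"

definition col_count :: "matrix \<Rightarrow> nat set \<Rightarrow> nat \<Rightarrow> nat" where
  "col_count B R j = card {i \<in> R. B i j > 0}"

end

theory Submission
  imports Defs
begin

text \<open>Suppose at most \<open>k\<close> cuts clear \<open>B\<close>. The at most \<open>2k\<close> rows containing an end of a cut
  split the \<open>n\<close> rows into at most \<open>2k+1\<close> intervals, so some window \<open>W\<close> of \<open>(4k+1)\<^sup>k\<close> rows
  contains no end of a cut. A button in \<open>W\<close> can only have been removed by a vertical cut,
  so at most \<open>k\<close> columns carry buttons in \<open>W\<close>; and every subinterval of \<open>W\<close> is a row block,
  because each column segment in it is removed by a single cut.
  Finally, an interval of \<open>(4k+1)\<^sup>c\<close> rows on which only \<open>c\<close> columns carry buttons contains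
  a subinterval with a separating row. Take its middle row, with \<open>h = kM + k - 1\<close> rows on
  either side, where \<open>M = (4k+1)\<^sup>c\<^sup>-\<^sup>1\<close>. If that row is not separating, some column has fewer
  than \<open>k\<close> buttons on one side, so by pigeonhole it is empty on a run of \<open>M\<close> rows there,
  and we recurse on that run with one column less.\<close>

definition separating_row :: "matrix \<Rightarrow> nat \<Rightarrow> nat \<Rightarrow> nat \<Rightarrow> nat \<Rightarrow> nat \<Rightarrow> bool" where
  "separating_row B m k a b i0 \<longleftrightarrow> a \<le> i0 \<and> i0 \<le> b \<and>
     (\<forall>j \<in> {1..m}. col_count B {a..b} j = 0 \<or>
        (col_count B {a..<i0} j \<ge> k \<and> col_count B {i0<..b} j \<ge> k))"

lemma interval_avoiding_finite_set:
  fixes F :: "nat set"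
  assumes "finite F" "card F \<le> q" "(q + 1) * M + q \<le> L"
  shows "\<exists>a'. a \<le> a' \<and> a' + M \<le> a + L \<and> {a'..<a' + M} \<inter> F = {}"
  using assms
proof (induction q arbitrary: F a L)
  case 0
  then show ?case by auto
next
  case (Suc q)
  show ?case
  proof (cases "{a..<a + M} \<inter> F = {}")
    case True
    then show ?thesis using Suc.prems by auto
  next
    case False
    then obtain x where x: "x \<in> F" "a \<le> x" "x < a + M" by auto
    have "card (F - {x}) \<le> q" "finite (F - {x})" using Suc.prems x by auto
    moreover have "(q + 1) * M + q \<le> a + L - (x + 1)" using Suc.prems(3) x by simp
    ultimately obtain a' where "x + 1 \<le> a'" "a' + M \<le> a + L" "{a'..<a' + M} \<inter> (F - {x}) = {}"
      using Suc.IH[of "F - {x}" "a + L - (x + 1)" "x + 1"] x by auto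
    then show ?thesis using x by (intro exI[of _ a']) auto
  qed
qed

lemma sparse_column_has_empty_run:
  assumes "col_count B {s..<s + h} j \<le> q" "(q + 1) * M + q \<le> h"
  shows "\<exists>a'. s \<le> a' \<and> a' + M \<le> s + h \<and> (\<forall>i \<in> {a'..<a' + M}. B i j = 0)"
proof -
  let ?F = "{i \<in> {s..<s + h}. B i j > 0}"
  have "finite ?F" by simp
  moreover have "card ?F \<le> q" using assms(1) unfolding col_count_def .
  ultimately obtain a' where "s \<le> a'" "a' + M \<le> s + h" "{a'..<a' + M} \<inter> ?F = {}"
    using interval_avoiding_finite_set[OF _ _ assms(2), of ?F s] by auto
  then show ?thesis by (intro exI[of _ a']) auto
qed

lemma empty_run_if_not_separating:
  assumes "\<not> separating_row B m k a (a + 2 * h) (a + h)" and h: "h = k * M + k - 1"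
  shows "\<exists>j \<in> {1..m}. col_count B {a..a + 2 * h} j \<noteq> 0 \<and>
           (\<exists>a'. a \<le> a' \<and> a' + M \<le> a + 2 * h + 1 \<and> (\<forall>i \<in> {a'..<a' + M}. B i j = 0))"
proof -
  obtain j where j: "j \<in> {1..m}" "col_count B {a..a + 2 * h} j \<noteq> 0"
    and sparse: "col_count B {a..<a + h} j < k \<or> col_count B {a + h<..a + 2 * h} j < k"
    using assms(1) unfolding separating_row_def by auto
  have "k > 0" using sparse by auto
  then have run: "(k - 1 + 1) * M + (k - 1) \<le> h" using h by simp
  have "\<exists>a'. a \<le> a' \<and> a' + M \<le> a + 2 * h + 1 \<and> (\<forall>i \<in> {a'..<a' + M}. B i j = 0)"
  proof (cases "col_count B {a..<a + h} j < k")
    case True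
    then have "col_count B {a..<a + h} j \<le> k - 1" by simp
    from sparse_column_has_empty_run[OF this run] obtain a' where
      "a \<le> a'" "a' + M \<le> a + h" "\<forall>i \<in> {a'..<a' + M}. B i j = 0" by blast
    then show ?thesis by (intro exI[of _ a']) auto
  next
    case False
    have "{a + h<..a + 2 * h} = {a + h + 1..<a + h + 1 + h}" by auto
    then have "col_count B {a + h + 1..<a + h + 1 + h} j \<le> k - 1" using False sparse by simp
    from sparse_column_has_empty_run[OF this run] obtain a' where
      "a + h + 1 \<le> a'" "a' + M \<le> a + h + 1 + h" "\<forall>i \<in> {a'..<a' + M}. B i j = 0" by blast
    then show ?thesis by (intro exI[of _ a']) auto
  qed
  with j show ?thesis by blast
qed

lemma separating_row_exists:
  assumes "finite J" "card J \<le> c"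
    and "\<forall>j \<in> {1..m}. j \<notin> J \<longrightarrow> (\<forall>i \<in> {a..<a + L}. B i j = 0)"
    and "(4 * k + 1) ^ c \<le> L"
  shows "\<exists>a' b' i0. a \<le> a' \<and> b' < a + L \<and> separating_row B m k a' b' i0"
  using assms
proof (induction c arbitrary: J a L)
  case 0
  then have "col_count B {a..a} j = 0" if "j \<in> {1..m}" for j
    using that unfolding col_count_def by auto
  moreover have "a < a + L" using "0.prems"(4) by simp
  ultimately have "separating_row B m k a a a" "a \<le> a" "a < a + L"
    unfolding separating_row_def by auto
  then show ?case by blast
next
  case (Suc c)
  define M where "M = (4 * k + 1) ^ c"
  define h where "h = k * M + k - 1"
  have "M \<ge> 1" unfolding M_def by simp
  then have "k \<le> k * M" by simp
  moreover have "(4 * k + 1) * M = 4 * (k * M) + M" by (simp add: algebra_simps)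
  ultimately have "2 * h + 1 \<le> (4 * k + 1) * M" using \<open>M \<ge> 1\<close> unfolding h_def by linarith
  then have "2 * h + 1 \<le> L" using Suc.prems(4) unfolding M_def by simp
  show ?case
  proof (cases "separating_row B m k a (a + 2 * h) (a + h)")
    case True
    moreover have "a + 2 * h < a + L" using \<open>2 * h + 1 \<le> L\<close> by simp
    ultimately show ?thesis by (intro exI[of _ a] exI[of _ "a + 2 * h"] exI[of _ "a + h"]) simp
  next
    case False
    then obtain j a' where j: "j \<in> {1..m}" "col_count B {a..a + 2 * h} j \<noteq> 0"
      and a': "a \<le> a'" "a' + M \<le> a + 2 * h + 1" "\<forall>i \<in> {a'..<a' + M}. B i j = 0"
      using empty_run_if_not_separating[OF False h_def] by blast
    have "j \<in> J"
    proof (rule ccontr)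
      assume "j \<notin> J"
      then have "{i \<in> {a..a + 2 * h}. B i j > 0} = {}"
        using Suc.prems(3) j(1) \<open>2 * h + 1 \<le> L\<close> by auto
      then show False using j(2) unfolding col_count_def by simp
    qed
    have "{a'..<a' + M} \<subseteq> {a..<a + L}" using a'(1,2) \<open>2 * h + 1 \<le> L\<close> by auto
    then have empty: "\<forall>j' \<in> {1..m}. j' \<notin> J - {j} \<longrightarrow> (\<forall>i \<in> {a'..<a' + M}. B i j' = 0)"
      using a'(3) Suc.prems(3) by (metis Diff_iff singletonD subsetD)
    have "finite (J - {j})" "card (J - {j}) \<le> c"
      using Suc.prems(1,2) \<open>j \<in> J\<close> by auto
    then have "\<exists>a'' b'' i0. a' \<le> a'' \<and> b'' < a' + M \<and> separating_row B m k a'' b'' i0"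
      using Suc.IH[OF _ _ empty] unfolding M_def by blast
    then obtain a'' b'' i0 where "a' \<le> a''" "b'' < a' + M" "separating_row B m k a'' b'' i0"
      by blast
    moreover have "a \<le> a''" "b'' < a + L"
      using \<open>a' \<le> a''\<close> \<open>b'' < a' + M\<close> a'(1,2) \<open>2 * h + 1 \<le> L\<close> by linarith+
    ultimately show ?thesis by (intro exI[of _ a''] exI[of _ b''] exI[of _ i0]) simp
  qed
qed

definition end_rows :: "cut \<Rightarrow> nat set" where
  "end_rows c = {fst (cut_first c), fst (cut_last c)}"

fun vertical_column :: "cut \<Rightarrow> nat set" where
  "vertical_column (HCut i j1 j2) = {}"
| "vertical_column (VCut j i1 i2) = {j}"

lemma card_end_rows_le: "card (end_rows c) \<le> 2"
  unfolding end_rows_def by (simp add: card_insert_if)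

lemma finite_vertical_column [simp]: "finite (vertical_column c)"
  by (cases c) auto

lemma card_vertical_column_le: "card (vertical_column c) \<le> 1"
  by (cases c) auto

lemma card_UN_set_le:
  assumes "\<And>x. x \<in> set xs \<Longrightarrow> card (f x) \<le> r"
  shows "card (\<Union>x \<in> set xs. f x) \<le> r * length xs"
proof -
  have "card (\<Union>x \<in> set xs. f x) \<le> (\<Sum>x \<in> set xs. card (f x))"
    by (rule card_UN_le) simp
  also have "\<dots> \<le> (\<Sum>x \<in> set xs. r)"
    using assms by (rule sum_mono)
  also have "\<dots> \<le> r * length xs"
    by (simp add: card_length)
  finally show ?thesis .
qed

lemma clears_covers:
  "clears B S cs \<Longrightarrow> p \<in> S \<Longrightarrow> \<exists>c \<in> set cs. p \<in> cut_cells c"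
  by (induction cs arbitrary: S) auto

lemma clears_same_colour:
  assumes "clears B S cs" "\<forall>c \<in> set cs. cut_cells c \<inter> T = {} \<or> T \<subseteq> cut_cells c"
    and "p \<in> S \<inter> T" "q \<in> S \<inter> T"
  shows "case_prod B p = case_prod B q"
  using assms
proof (induction cs arbitrary: S)
  case Nil
  then show ?case by simp
next
  case (Cons c cs)
  show ?case
  proof (cases "cut_cells c \<inter> T = {}")
    case True
    then show ?thesis using Cons.prems by (intro Cons.IH[of "S - cut_cells c"]) auto
  next
    case False
    then have "p \<in> cut_cells c \<inter> S" "q \<in> cut_cells c \<inter> S" using Cons.prems by auto
    moreover have "valid_cut B S c" using Cons.prems(1) by simp
    ultimately show ?thesis unfolding valid_cut_def by blast
  qed
qed

lemma cut_cells_disjoint_or_contain_segment: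
  assumes "end_rows c \<inter> {a..b} = {}"
  shows "cut_cells c \<inter> {a..b} \<times> {j} = {} \<or> {a..b} \<times> {j} \<subseteq> cut_cells c"
  using assms by (cases c) (auto simp: end_rows_def)

lemma row_block_if_no_end_rows:
  assumes "clears B (buttons B n m) cs" "1 \<le> a" "a \<le> b" "b \<le> n"
    and "{a..b} \<inter> (\<Union>c \<in> set cs. end_rows c) = {}"
  shows "row_block B n m a b"
  unfolding row_block_def
proof (intro conjI ballI impI)
  fix j i i' assume "j \<in> {1..m}" "i \<in> {a..b}" "i' \<in> {a..b}" "0 < B i j" "0 < B i' j"
  have "\<forall>c \<in> set cs. cut_cells c \<inter> {a..b} \<times> {j} = {} \<or> {a..b} \<times> {j} \<subseteq> cut_cells c"
  proof
    fix c assume "c \<in> set cs"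
    then have "end_rows c \<inter> {a..b} = {}" using assms(5) by blast
    then show "cut_cells c \<inter> {a..b} \<times> {j} = {} \<or> {a..b} \<times> {j} \<subseteq> cut_cells c"
      by (rule cut_cells_disjoint_or_contain_segment)
  qed
  moreover have "(i, j) \<in> buttons B n m \<inter> {a..b} \<times> {j}" "(i', j) \<in> buttons B n m \<inter> {a..b} \<times> {j}"
    using \<open>j \<in> {1..m}\<close> \<open>i \<in> {a..b}\<close> \<open>i' \<in> {a..b}\<close> \<open>0 < B i j\<close> \<open>0 < B i' j\<close> assms(2,4)
    unfolding buttons_def by auto
  ultimately have "case_prod B (i, j) = case_prod B (i', j)"
    by (rule clears_same_colour[OF assms(1)])
  then show "B i j = B i' j" by simp
qed (use assms in auto)

lemma button_in_vertical_column:
  assumes "clears B S cs" "(i, j) \<in> S" "i \<notin> (\<Union>c \<in> set cs. end_rows c)"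
  shows "j \<in> (\<Union>c \<in> set cs. vertical_column c)"
proof -
  obtain c where "c \<in> set cs" "(i, j) \<in> cut_cells c"
    using clears_covers[OF assms(1,2)] by blast
  moreover from this assms(3) have "i \<notin> end_rows c" by blast
  ultimately have "j \<in> vertical_column c" by (cases c rule: cut.exhaust) (auto simp: end_rows_def)
  with \<open>c \<in> set cs\<close> show ?thesis by blast
qed

lemma window_bound_le:
  fixes k n :: nat
  assumes "(4 * k^2 + 1) * (k + 1) * k * (4 * k + 6) ^ k < n"
  shows "(2 * k + 1) * (4 * k + 1) ^ k + 2 * k \<le> n"
proof (cases "k = 0")
  case True
  then show ?thesis using assms by simp
next
  case False
  define P where "P = (4 * k + 6) ^ k"
  have "(4 * k + 1) ^ k \<le> P" "1 \<le> P" unfolding P_def by (simp_all add: power_mono)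
  then have "(2 * k + 1) * (4 * k + 1) ^ k + 2 * k \<le> (2 * k + 1) * P + 2 * k * P"
    by (intro add_mono mult_le_mono2) simp_all
  also have "\<dots> = (4 * k + 1) * P" by (simp add: algebra_simps)
  also have "\<dots> \<le> (4 * k^2 + 1) * (k + 1) * k * P"
  proof (intro mult_le_mono1)
    have "4 * k + 1 \<le> 5 * k" using False by simp
    also have "\<dots> \<le> (4 * k^2 + 1) * k" using False by (simp add: power2_eq_square)
    also have "\<dots> \<le> (4 * k^2 + 1) * (k + 1) * k" by simp
    finally show "4 * k + 1 \<le> (4 * k^2 + 1) * (k + 1) * k" .
  qed
  finally show ?thesis using assms unfolding P_def by linarith
qed

lemma end_row_free_window:
  assumes "length cs \<le> k" "(2 * k + 1) * M + 2 * k \<le> n"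
  shows "\<exists>a0. 1 \<le> a0 \<and> a0 + M \<le> n + 1 \<and> {a0..<a0 + M} \<inter> (\<Union>c \<in> set cs. end_rows c) = {}"
proof -
  have "finite (\<Union>c \<in> set cs. end_rows c)" unfolding end_rows_def by auto
  moreover have "card (\<Union>c \<in> set cs. end_rows c) \<le> 2 * k"
    using card_UN_set_le[of cs end_rows 2] card_end_rows_le assms(1) by fastforce
  ultimately show ?thesis using interval_avoiding_finite_set[OF _ _ assms(2), of _ 1] by auto
qed

lemma separating_row_block_in_window:
  assumes clears: "clears B (buttons B n m) cs" and "length cs \<le> k"
    and window: "1 \<le> a0" "a0 + (4 * k + 1) ^ k \<le> n + 1"
      "{a0..<a0 + (4 * k + 1) ^ k} \<inter> (\<Union>c \<in> set cs. end_rows c) = {}"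
  shows "\<exists>a b i0. row_block B n m a b \<and> separating_row B m k a b i0"
proof -
  define R where "R = (\<Union>c \<in> set cs. end_rows c)"
  define J where "J = (\<Union>c \<in> set cs. vertical_column c)"
  define M where "M = (4 * k + 1) ^ k"
  have "finite J" "card J \<le> k"
    using card_UN_set_le[of cs vertical_column 1] card_vertical_column_le \<open>length cs \<le> k\<close>
    unfolding J_def by auto
  moreover have "\<forall>j \<in> {1..m}. j \<notin> J \<longrightarrow> (\<forall>i \<in> {a0..<a0 + M}. B i j = 0)"
  proof (intro ballI impI)
    fix j i assume "j \<in> {1..m}" "j \<notin> J" "i \<in> {a0..<a0 + M}"
    show "B i j = 0"
    proof (rule ccontr)
      assume "B i j \<noteq> 0"
      then have "(i, j) \<in> buttons B n m"
        using \<open>j \<in> {1..m}\<close> \<open>i \<in> {a0..<a0 + M}\<close> window(1,2) unfolding buttons_def M_def by auto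
      moreover have "i \<notin> R" using \<open>i \<in> {a0..<a0 + M}\<close> window(3) unfolding R_def M_def by blast
      ultimately have "j \<in> J" using button_in_vertical_column[OF clears] unfolding R_def J_def by blast
      with \<open>j \<notin> J\<close> show False by contradiction
    qed
  qed
  moreover have "(4 * k + 1) ^ k \<le> M" unfolding M_def ..
  ultimately obtain a b i0 where "a0 \<le> a" "b < a0 + M" and separating: "separating_row B m k a b i0"
    using separating_row_exists by blast
  then have "{a..b} \<subseteq> {a0..<a0 + M}" "a \<le> b" "1 \<le> a" "b \<le> n"
    using window(1,2) unfolding separating_row_def M_def by auto
  moreover from this(1) have "{a..b} \<inter> R = {}" using window(3) unfolding R_def M_def by blast
  ultimately have "row_block B n m a b"
    using row_block_if_no_end_rows[OF clears] unfolding R_def by simp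
  with separating show ?thesis by blast
qed

theorem mainTheorem4:
  fixes B :: matrix and n m k :: nat
  assumes rows: "\<forall>i \<in> {1..n}. \<exists>j \<in> {1..m}. B i j > 0"
    and no_block: "\<not> (\<exists>a b i0. row_block B n m a b \<and> a \<le> i0 \<and> i0 \<le> b \<and>
         (\<forall>j \<in> {1..m}. col_count B {a..b} j = 0 \<or>
            (col_count B {a..<i0} j \<ge> k \<and> col_count B {i0<..b} j \<ge> k)))"
    and large: "n > (4 * k^2 + 1) * (k + 1) * k * (4 * k + 6) ^ k"
  shows "\<not> yes_instance B n m k"
proof
  assume "yes_instance B n m k"
  then obtain cs where "length cs \<le> k" "clears B (buttons B n m) cs"
    unfolding yes_instance_def by auto
  moreover obtain a0 where "1 \<le> a0" "a0 + (4 * k + 1) ^ k \<le> n + 1"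
    "{a0..<a0 + (4 * k + 1) ^ k} \<inter> (\<Union>c \<in> set cs. end_rows c) = {}"
    using end_row_free_window[OF \<open>length cs \<le> k\<close> window_bound_le[OF large]] by blast
  ultimately obtain a b i0 where "row_block B n m a b" "separating_row B m k a b i0"
    using separating_row_block_in_window[of B n m cs k a0] by blast
  then show False using no_block unfolding separating_row_def by blast
qed

end
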